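(* Let $q\ge 2$ and let $R\subseteq\mathbb{Z}[\tfrac1q]\rtimes\mathbb{Z}$ be a rational subset. If $R\subseteq\mathbb{Z}[\tfrac1q]\times\{0\}$, then there is $k\in\mathbb{N}$ with $R\subseteq\tfrac{1}{q^k}\mathbb{Z}\times\{0\}$.
   Context: $\mathbb{Z}[\tfrac1q]\rtimes\mathbb{Z}$ is the group of pairs $(r,m)$, $r\in\mathbb{Z}[\tfrac1q]=\{nq^i:n,i\in\mathbb{Z}\}$, $m\in\mathbb{Z}$, with $(r,m)(r',m')=(r+q^m r',m+m')$, generated by $(\pm1,0),(0,\pm1)$. A subset is rational if it is accepted by a finite automaton whose edges are labelled by these generators, i.e. it is the set of products of edge labels along runs from an initial to a final state. *)

theory Defs
  imports Main "HOL.Rat"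
begin

text \<open>Elements of Z[1/q] \<rtimes> Z are represented as pairs (r, m) of a rational r and an
integer m, where r is required to lie in Z[1/q].\<close>

definition Zinvq :: "int \<Rightarrow> rat set" where
  "Zinvq q = {r. \<exists>n i. r = of_int n * (of_int q) powi i}"

definition BS :: "int \<Rightarrow> (rat \<times> int) set" where
  "BS q = Zinvq q \<times> UNIV"

definition bsmul :: "int \<Rightarrow> rat \<times> int \<Rightarrow> rat \<times> int \<Rightarrow> rat \<times> int" where
  "bsmul q x y = (fst x + (of_int q) powi (snd x) * fst y, snd x + snd y)"

definition bsgens :: "(rat \<times> int) set" where
  "bsgens = {(1, 0), (-1, 0), (0, 1), (0, -1)}"

inductive reach :: "int \<Rightarrow> (nat \<times> (rat \<times> int) \<times> nat) set \<Rightarrow> nat \<Rightarrow> rat \<times> int \<Rightarrow> nat \<Rightarrow> bool"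
  for q E where
  refl: "reach q E s (0, 0) s"
| step: "reach q E s g t \<Longrightarrow> (t, a, u) \<in> E \<Longrightarrow> reach q E s (bsmul q g a) u"

definition accepted :: "int \<Rightarrow> (nat \<times> (rat \<times> int) \<times> nat) set \<Rightarrow> nat set \<Rightarrow> nat set \<Rightarrow> (rat \<times> int) set" where
  "accepted q E I F = {g. \<exists>s\<in>I. \<exists>t\<in>F. reach q E s g t}"

definition rational_subset :: "int \<Rightarrow> (rat \<times> int) set \<Rightarrow> bool" where
  "rational_subset q R \<longleftrightarrow> (\<exists>E I F. finite E \<and> finite I \<and> finite F \<and>
      (\<forall>(s, a, t)\<in>E. a \<in> bsgens) \<and> R = accepted q E I F)"

end

theory Submission
  imports Defs
begin

text \<open>Trim the automaton to the states lying on some accepting run. Two runs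
from initial states into such a state t can be completed by one and the same run from t to a
final state, and both completed runs end in height 0; so the height (the \<int>-coordinate) of
a run is determined by the state it reaches. With finitely many states, the heights of all
prefixes of accepting runs are bounded below by some -k, and each edge then adds
q^m \<cdot> (0 or \<plusminus>1) with m \<ge> -k to the first coordinate, which stays in q^-k \<int>.\<close>

lemma power_int_nonneg_in_Ints: "0 \<le> m \<Longrightarrow> (of_int q :: 'a :: division_ring) powi m \<in> \<int>"
  by (metis nonneg_int_cases power_int_of_nat of_int_power Ints_of_int)

lemma finite_int_set_bounded_below_nat:
  assumes "finite (A :: int set)"
  obtains k :: nat where "\<forall>x\<in>A. - int k \<le> x"
proof -
  obtain b where "\<forall>x\<in>A. b \<le> x"
    using bdd_below_finite[OF assms] unfolding bdd_below_def by blast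
  then have "\<forall>x\<in>A. - int (nat (- b)) \<le> x" by force
  then show ?thesis by (rule that)
qed

lemma fst_bsmul: "fst (bsmul q x y) = fst x + of_int q powi snd x * fst y"
  by (simp add: bsmul_def)

lemma snd_bsmul: "snd (bsmul q x y) = snd x + snd y"
  by (simp add: bsmul_def)

lemma bsmul_assoc:
  assumes "q \<noteq> 0"
  shows "bsmul q (bsmul q x y) z = bsmul q x (bsmul q y z)"
  using assms by (simp add: bsmul_def power_int_add algebra_simps)

lemma reach_edge: "(s, a, t) \<in> E \<Longrightarrow> reach q E s a t"
  using reach.step[OF reach.refl] by (simp add: bsmul_def)

lemma reach_trans:
  assumes "q \<noteq> 0" and "reach q E s g t" and "reach q E t h u"
  shows "reach q E s (bsmul q g h) u"
  using assms(3,2)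
proof (induction rule: reach.induct)
  case refl
  then show ?case by (simp add: bsmul_def)
next
  case (step t h v a u)
  then have "reach q E s (bsmul q (bsmul q g h) a) u" by (blast intro: reach.step)
  then show ?case by (simp add: bsmul_assoc[OF assms(1)])
qed

lemma reach_end_state: "reach q E s g t \<Longrightarrow> t = s \<or> t \<in> snd ` snd ` E"
  by (induction rule: reach.induct) force+

definition coaccessible :: "int \<Rightarrow> (nat \<times> (rat \<times> int) \<times> nat) set \<Rightarrow> nat set \<Rightarrow> nat \<Rightarrow> bool"
  where "coaccessible q E F t \<longleftrightarrow> (\<exists>f\<in>F. \<exists>h. reach q E t h f)"

lemma coaccessible_final: "t \<in> F \<Longrightarrow> coaccessible q E F t"
  unfolding coaccessible_def by (blast intro: reach.refl)

lemma coaccessible_edge: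
  assumes "q \<noteq> 0" and "(t, a, u) \<in> E" and "coaccessible q E F u"
  shows "coaccessible q E F t"
  using assms reach_trans[OF assms(1) reach_edge] unfolding coaccessible_def by blast

definition prefix_heights :: "int \<Rightarrow> (nat \<times> (rat \<times> int) \<times> nat) set \<Rightarrow> nat set \<Rightarrow> nat set \<Rightarrow> int set"
  where "prefix_heights q E I F =
    {snd g | g. \<exists>s\<in>I. \<exists>t. reach q E s g t \<and> coaccessible q E F t}"

lemma height_determined_by_state:
  assumes "q \<noteq> 0" and "\<forall>g\<in>accepted q E I F. snd g = 0"
    and "s\<^sub>1 \<in> I" "reach q E s\<^sub>1 g\<^sub>1 t" and "s\<^sub>2 \<in> I" "reach q E s\<^sub>2 g\<^sub>2 t"
    and "coaccessible q E F t"
  shows "snd g\<^sub>1 = snd g\<^sub>2"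
proof -
  obtain f h where "f \<in> F" "reach q E t h f"
    using assms(7) unfolding coaccessible_def by blast
  then have "bsmul q g\<^sub>1 h \<in> accepted q E I F" "bsmul q g\<^sub>2 h \<in> accepted q E I F"
    using assms(3-6) reach_trans[OF assms(1)] unfolding accepted_def by blast+
  then have "snd g\<^sub>1 + snd h = 0" "snd g\<^sub>2 + snd h = 0"
    using assms(2) by (metis snd_bsmul)+
  then show ?thesis by simp
qed

lemma finite_prefix_heights:
  assumes "q \<noteq> 0" and "finite E" and "finite I" and "\<forall>g\<in>accepted q E I F. snd g = 0"
  shows "finite (prefix_heights q E I F)"
proof -
  define heights_at where
    "heights_at t = {snd g | g. \<exists>s\<in>I. reach q E s g t \<and> coaccessible q E F t}" for t
  have "finite (heights_at t)" for t
  proof (cases "heights_at t = {}")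
    case False
    then obtain x where "x \<in> heights_at t" by blast
    then have "heights_at t \<subseteq> {x}"
      unfolding heights_at_def using height_determined_by_state[OF assms(1,4)] by blast
    then show ?thesis using finite_subset by blast
  qed simp
  moreover have "prefix_heights q E I F \<subseteq> (\<Union>t \<in> I \<union> snd ` snd ` E. heights_at t)"
    unfolding prefix_heights_def heights_at_def using reach_end_state by fastforce
  ultimately show ?thesis
    using assms(2,3) by (meson finite_UN_I finite_Un finite_imageI finite_subset)
qed

lemma fst_reach_scaled_in_Ints:
  assumes "q \<noteq> 0" and "\<forall>(s, a, t)\<in>E. fst a \<in> \<int>"
    and "\<forall>x\<in>prefix_heights q E I F. - int k \<le> x"
    and "reach q E s g t" and "s \<in> I" and "coaccessible q E F t"
  shows "fst g * of_int q ^ k \<in> \<int>"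
  using assms(4-6)
proof (induction rule: reach.induct)
  case refl
  show ?case by simp
next
  case (step s g t a u)
  have "coaccessible q E F t" using coaccessible_edge[OF assms(1) step.hyps(2) step.prems(2)] .
  moreover from this have "snd g \<in> prefix_heights q E I F"
    unfolding prefix_heights_def using step.hyps(1) step.prems(1) by blast
  ultimately have IH: "fst g * of_int q ^ k \<in> \<int>" and "0 \<le> snd g + int k"
    using step.IH step.prems(1) assms(3) by auto
  then have "of_int q powi (snd g + int k) * fst a \<in> \<int>"
    using assms(2) step.hyps(2) by (blast intro: Ints_mult power_int_nonneg_in_Ints)
  moreover have "fst (bsmul q g a) * of_int q ^ k
      = fst g * of_int q ^ k + of_int q powi (snd g + int k) * fst a"
    using assms(1) by (simp add: fst_bsmul power_int_add algebra_simps)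
  ultimately show ?case using IH by simp
qed

theorem mainTheorem7:
  fixes q :: int and R :: "(rat \<times> int) set"
  assumes "q \<ge> 2"
    and "rational_subset q R"
    and "R \<subseteq> Zinvq q \<times> {0}"
  shows "\<exists>k::nat. R \<subseteq> {(of_int n / (of_int q) ^ k, 0) | n. True}"
proof -
  have q: "q \<noteq> 0" using assms(1) by simp
  obtain E I F where "finite E" "finite I" and labels: "\<forall>(s, a, t)\<in>E. a \<in> bsgens"
    and R: "R = accepted q E I F"
    using assms(2) unfolding rational_subset_def by blast
  have height_0: "\<forall>g\<in>accepted q E I F. snd g = 0" using assms(3) R by auto
  have integral_labels: "\<forall>(s, a, t)\<in>E. fst a \<in> \<int>" using labels by (auto simp: bsgens_def)
  obtain k where heights_bound: "\<forall>x\<in>prefix_heights q E I F. - int k \<le> x"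
    using finite_int_set_bounded_below_nat
      finite_prefix_heights[OF q \<open>finite E\<close> \<open>finite I\<close> height_0] by blast
  have "R \<subseteq> {(of_int n / (of_int q) ^ k, 0) | n. True}"
  proof
    fix g assume "g \<in> R"
    then obtain s f where "s \<in> I" "f \<in> F" "reach q E s g f" unfolding R accepted_def by blast
    then have "fst g * of_int q ^ k \<in> \<int>"
      using fst_reach_scaled_in_Ints[OF q integral_labels heights_bound] coaccessible_final
      by blast
    then obtain n where "fst g * of_int q ^ k = of_int n" by (elim Ints_cases)
    with q \<open>g \<in> R\<close> height_0 R show "g \<in> {(of_int n / (of_int q) ^ k, 0) | n. True}"
      by (cases g) (auto simp: field_simps)
  qed
  then show ?thesis by blast
qed

end
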